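(* Let $\psi(\bm{x},\bm{y})$ be a quantifier-free Presburger formula with $\bm{x}$ ranging over $\mathbb{Z}^n$ and $\bm{y}$ over $\mathbb{Z}^m$, let $\gamma$ be the sentence $\forall\bm{y}\,\exists\bm{x}\colon\psi(\bm{x},\bm{y})$, and let $\Gamma(\bm{y})$ be the formula $\exists\bm{x}\colon\psi(\bm{x},\bm{y})$. Define the formula $\varphi((x,\bar{\bm{x}}),(y,\bar{\bm{y}}))$, where $x,y$ are single variables and $\bar{\bm{x}},\bar{\bm{y}}$ are vectors of $m$ variables, by $$\varphi\coloneqq (x<0\wedge y<0)\vee(x>0\wedge y>0)\vee(x<0\wedge y=0)\vee(x=0\wedge y>0)\vee(x=0\wedge y=0)\vee(x<0\wedge y>0\wedge\Gamma(\bar{\bm{y}})).$$ Then the relation on $\mathbb{Z}^{1+m}$ defined by $\varphi$ is a well-quasi-ordering if and only if $\gamma$ is true, i.e. $\Gamma(\bm{w})$ holds for every $\bm{w}\in\mathbb{Z}^m$.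
   Context: Presburger formulas are over $\langle\mathbb{Z};+,<,(\equiv_m)_m,0,1\rangle$; quantifier-free formulas are Boolean combinations of linear inequalities and modulo constraints. A well-quasi-ordering on a set $X$ is a reflexive and transitive relation $\le$ on $X$ such that every infinite sequence $x_1,x_2,\ldots\in X$ has $i<j$ with $x_i\le x_j$. *)

theory Defs
  imports Main
begin

text \<open>Terms are built from variables, 0, 1, + (and unary minus, which is definable
  in quantifier-free Presburger arithmetic by moving summands across relations).\<close>

datatype pterm = PVar nat | PZero | POne | PPlus pterm pterm | PNeg pterm

datatype qf_pres =
    PTrue
  | PLess pterm pterm
  | PCong nat pterm pterm
  | PNot qf_pres
  | PAnd qf_pres qf_pres
  | POr qf_pres qf_pres

fun teval :: "pterm \<Rightarrow> int list \<Rightarrow> int" where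
  "teval (PVar i) e = e ! i"
| "teval PZero e = 0"
| "teval POne e = 1"
| "teval (PPlus s t) e = teval s e + teval t e"
| "teval (PNeg t) e = - teval t e"

fun peval :: "qf_pres \<Rightarrow> int list \<Rightarrow> bool" where
  "peval PTrue e = True"
| "peval (PLess s t) e = (teval s e < teval t e)"
| "peval (PCong k s t) e = (teval s e mod int k = teval t e mod int k)"
| "peval (PNot f) e = (\<not> peval f e)"
| "peval (PAnd f g) e = (peval f e \<and> peval g e)"
| "peval (POr f g) e = (peval f e \<or> peval g e)"

fun tvars :: "pterm \<Rightarrow> nat set" where
  "tvars (PVar i) = {i}"
| "tvars PZero = {}"
| "tvars POne = {}"
| "tvars (PPlus s t) = tvars s \<union> tvars t"
| "tvars (PNeg t) = tvars t"

fun pvars :: "qf_pres \<Rightarrow> nat set" where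
  "pvars PTrue = {}"
| "pvars (PLess s t) = tvars s \<union> tvars t"
| "pvars (PCong k s t) = tvars s \<union> tvars t"
| "pvars (PNot f) = pvars f"
| "pvars (PAnd f g) = pvars f \<union> pvars g"
| "pvars (POr f g) = pvars f \<union> pvars g"

definition wqo_on :: "('a \<Rightarrow> 'a \<Rightarrow> bool) \<Rightarrow> 'a set \<Rightarrow> bool" where
  "wqo_on le X \<longleftrightarrow>
     (\<forall>x\<in>X. le x x) \<and>
     (\<forall>x\<in>X. \<forall>y\<in>X. \<forall>z\<in>X. le x y \<longrightarrow> le y z \<longrightarrow> le x z) \<and>
     (\<forall>f :: nat \<Rightarrow> 'a. (\<forall>i. f i \<in> X) \<longrightarrow> (\<exists>i j. i < j \<and> le (f i) (f j)))"

text \<open>psi(x,y) with x in Z^n (variables 0..n-1) and y in Z^m (variables n..n+m-1);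
  the environment is the concatenation x @ y.\<close>

definition Gamma :: "qf_pres \<Rightarrow> nat \<Rightarrow> int list \<Rightarrow> bool" where
  "Gamma \<psi> n ys \<longleftrightarrow> (\<exists>xs. length xs = n \<and> peval \<psi> (xs @ ys))"

text \<open>phi((x, xbar), (y, ybar)) on Z^(1+m), elements represented as lists of length 1+m.\<close>

definition phi_rel :: "qf_pres \<Rightarrow> nat \<Rightarrow> int list \<Rightarrow> int list \<Rightarrow> bool" where
  "phi_rel \<psi> n u v \<longleftrightarrow>
     (let x = hd u; y = hd v; ybar = tl v in
       (x < 0 \<and> y < 0) \<or> (x > 0 \<and> y > 0) \<or> (x < 0 \<and> y = 0) \<or> (x = 0 \<and> y > 0)
       \<or> (x = 0 \<and> y = 0) \<or> (x < 0 \<and> y > 0 \<and> Gamma \<psi> n ybar))"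

end

theory Submission
  imports Defs
begin

text \<open>If \<open>\<Gamma>\<close> holds everywhere, \<open>\<phi>\<close> just compares the signs of the first coordinates, a
  total preorder with three classes, hence a wqo. Conversely, \<open>(-1,0) \<le> (0,0) \<le> (1,w)\<close>
  always holds, so transitivity forces \<open>(-1,0) \<le> (1,w)\<close>, i.e. \<open>\<Gamma>(w)\<close>.\<close>

lemma wqo_on_pullback_finite_linorder:
  fixes g :: "'a \<Rightarrow> 'b :: linorder"
  assumes le_iff: "\<And>x y. x \<in> X \<Longrightarrow> y \<in> X \<Longrightarrow> le x y \<longleftrightarrow> g x \<le> g y"
    and finite_values: "finite (g ` X)"
  shows "wqo_on le X"
  unfolding wqo_on_def
proof (intro conjI ballI allI impI)
  fix x assume "x \<in> X"
  then show "le x x" using le_iff by simp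
next
  fix x y z assume "x \<in> X" "y \<in> X" "z \<in> X" "le x y" "le y z"
  then show "le x z" using le_iff by (meson order_trans)
next
  fix f :: "nat \<Rightarrow> 'a" assume in_X: "\<forall>i. f i \<in> X"
  have "finite (range (g \<circ> f))"
    using in_X by (auto intro: finite_subset[OF _ finite_values])
  then have "\<not> inj (g \<circ> f)"
    using finite_imageD infinite_UNIV_nat by blast
  then obtain i j where "i \<noteq> j" "g (f i) = g (f j)"
    unfolding inj_def by auto
  then have "i < j \<and> le (f i) (f j) \<or> j < i \<and> le (f j) (f i)"
    using in_X le_iff by (auto simp: linorder_neq_iff)
  then show "\<exists>i j. i < j \<and> le (f i) (f j)" by blast
qed

lemma phi_rel_iff_sgn_le:
  assumes "Gamma \<psi> n (tl v)"
  shows "phi_rel \<psi> n u v \<longleftrightarrow> sgn (hd u) \<le> sgn (hd v)"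
  using assms by (auto simp: phi_rel_def sgn_if)

lemma Gamma_if_phi_rel_transitive_on:
  assumes trans: "\<And>x y z. length x = Suc m \<Longrightarrow> length y = Suc m \<Longrightarrow> length z = Suc m \<Longrightarrow>
      phi_rel \<psi> n x y \<Longrightarrow> phi_rel \<psi> n y z \<Longrightarrow> phi_rel \<psi> n x z"
    and "length w = m"
  shows "Gamma \<psi> n w"
proof -
  let ?neg = "-1 # replicate m 0" and ?zero = "0 # replicate m 0"
  have neg_zero: "phi_rel \<psi> n ?neg ?zero" and zero_w: "phi_rel \<psi> n ?zero (1 # w)"
    by (auto simp: phi_rel_def)
  have "phi_rel \<psi> n ?neg (1 # w)"
    by (rule trans[OF _ _ _ neg_zero zero_w]) (simp_all add: \<open>length w = m\<close>)
  then show ?thesis by (simp add: phi_rel_def)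
qed

theorem lemma5p1:
  fixes \<psi> :: qf_pres and n m :: nat
  assumes "pvars \<psi> \<subseteq> {..<n + m}"
  shows "wqo_on (phi_rel \<psi> n) {v :: int list. length v = Suc m}
         \<longleftrightarrow> (\<forall>w :: int list. length w = m \<longrightarrow> Gamma \<psi> n w)"
proof
  assume "wqo_on (phi_rel \<psi> n) {v :: int list. length v = Suc m}"
  then have "phi_rel \<psi> n x z"
    if "length x = Suc m" "length y = Suc m" "length z = Suc m"
       "phi_rel \<psi> n x y" "phi_rel \<psi> n y z" for x y z
    using that unfolding wqo_on_def by blast
  then show "\<forall>w. length w = m \<longrightarrow> Gamma \<psi> n w"
    using Gamma_if_phi_rel_transitive_on by blast
next
  assume Gamma_all: "\<forall>w :: int list. length w = m \<longrightarrow> Gamma \<psi> n w"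
  show "wqo_on (phi_rel \<psi> n) {v :: int list. length v = Suc m}"
  proof (rule wqo_on_pullback_finite_linorder)
    show "phi_rel \<psi> n u v \<longleftrightarrow> sgn (hd u) \<le> sgn (hd v)"
      if "v \<in> {v :: int list. length v = Suc m}" for u v
      using that Gamma_all by (intro phi_rel_iff_sgn_le) simp
    have "(\<lambda>v. sgn (hd v)) ` X \<subseteq> {-1, 0, 1 :: int}" for X :: "int list set"
      by (auto simp: sgn_if)
    then show "finite ((\<lambda>v. sgn (hd v)) ` {v :: int list. length v = Suc m})"
      by (rule finite_subset) simp
  qed
qed

end
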